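(* Assume the setting in the context, with a decomposition of $\mathcal X$ over $A$, a cost function $g\in\mathcal G_s$ and $\alpha\in(0,1)$. Then $\{(A,\rho_i\circ B,g,\alpha)\}_{i\in\mathcal I}$ is a decomposition (in the sense of Definition 2) of $(A,B,g,\alpha)$ if and only if for every choice of optimal control laws $u_i^*$ of the subproblems $(A,\rho_i\circ B,g,\alpha)$, $i\in\mathcal I$, there exists an optimal control law $u^*$ of $(A,B,g,\alpha)$ such that $$\rho_i\big(Ax+Bu^*(x)\big)=A\rho_i(x)+\rho_i\big(Bu_i^*(\rho_i(x))\big)\qquad\forall x\in\mathcal X,\ \forall i\in\mathcal I.$$
   Context: Let $\mathcal F$ be a field and $\mathcal X,\mathcal U$ finite-dimensional vector spaces over $\mathcal F$. Let $A:\mathcal X\to\mathcal X$ and $B:\mathcal U\to\mathcal X$ be linear maps with $B$ injective, and consider the system $x_{t+1}=Ax_t+Bu_t$ and a cost $g:\mathcal X\to\mathbb R_{\ge 0}$ with $g(x)=0\iff x=0$. Standing assumption: all minima appearing below are attained. Infinite-horizon problem $(A,B,g,\alpha)$: policies $\pi(x_0)=(\pi_t(x_0))_{t\in\mathbb Z_+}\in\mathcal U^{\mathbb Z_+}$, cost $J(x_0,\pi)=\sum_{t\ge0}\alpha^tg(x_t)$ with $x_{t+1}=Ax_t+B\pi_t(x_0)$; $J^*(x_0)=\min_\pi J(x_0,\pi)$, which satisfies $J^*(x)=g(x)+\alpha\min_uJ^*(Ax+Bu)$. An optimal control law of $(A,B,g,\alpha)$ is a map $u^*:\mathcal X\to\mathcal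 U$ with $u^*(x)\in\operatorname{argmin}_{u\in\mathcal U}J^*(Ax+Bu)$. A decomposition of $\mathcal X$ over $A$ is a direct sum $\mathcal X=\mathcal X_1\oplus\cdots\oplus\mathcal X_r$ with $r>1$ and $A\mathcal X_i\subseteq\mathcal X_i$, $i\in\mathcal I=\{1,\dots,r\}$; $\rho_i:\mathcal X\to\mathcal X_i$ is the projection along the other summands. $\mathcal G_s$ is the set of $h:\mathcal X\to\mathbb R_{\ge0}$ with $h(x)=\sum_i h(\rho_i(x))$ for all $x$. Subproblem $(A,\rho_i\circ B,g,\alpha)$: the system $x_{i,t+1}=Ax_{i,t}+\rho_i(Bu_{i,t})$ with states in $\mathcal X_i$ and inputs in $\mathcal U$, policies $\pi_i(x_{i,0})\in\mathcal U^{\mathbb Z_+}$, cost $J_i(x_{i,0},\pi_i)=\sum_{t\ge0}\alpha^tg(x_{i,t})$, optimal cost $J_i^*$, optimal policies $\pi_i^*$ with components $\pi^*_{i,t}$; an optimal control law is $u_i^*:\mathcal X_i\to\mathcal U$ with $u_i^*(z)\in\operatorname{argmin}_uJ_i^*(Az+\rho_i(Bu))$. Definition 2: $\{(A,\rho_i\circ B,g,\alpha)\}_{i\in\mathcal I}$ is a decomposition of $(A,B,g,\alpha)$ if for every $x\in\mathcal X$: $J^*(x)=\sum_iJ_i^*(\rho_i(x))$, and for every choice of optimal policies $\pi_i^*(\rho_i(x))$ there is an optimal policy $\pi^*(x)$ of $(A,B,g,\alpha)$ with $B\pi_t^*(x)=\sum_{i}\rho_i\big(B\pi^*_{i,t}(\rho_i(x))\big)$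 for all $t\in\mathbb Z_+$. *)

theory Defs
  imports Main "HOL-Library.Extended_Nonnegative_Real"
begin

definition fin_dim_vs :: "('f::field \<Rightarrow> 'v::ab_group_add \<Rightarrow> 'v) \<Rightarrow> bool" where
  "fin_dim_vs s \<longleftrightarrow> vector_space s \<and> (\<exists>S. finite S \<and> module.span s S = UNIV)"

definition is_decomposition ::
  "('f::field \<Rightarrow> 'x::ab_group_add \<Rightarrow> 'x) \<Rightarrow> ('x \<Rightarrow> 'x) \<Rightarrow> nat \<Rightarrow> (nat \<Rightarrow> 'x set) \<Rightarrow> bool" where
  "is_decomposition sX A r Xs \<longleftrightarrow> 1 < r \<and>
     (\<forall>i\<in>{1..r}. module.subspace sX (Xs i) \<and> A ` Xs i \<subseteq> Xs i) \<and>
     (\<forall>x. \<exists>!f. (\<forall>i\<in>{1..r}. f i \<in> Xs i) \<and> (\<forall>i. i \<notin> {1..r} \<longrightarrow> f i = 0) \<and>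
               x = (\<Sum>i\<in>{1..r}. f i))"

definition rho :: "nat \<Rightarrow> (nat \<Rightarrow> 'x::ab_group_add set) \<Rightarrow> nat \<Rightarrow> 'x \<Rightarrow> 'x" where
  "rho r Xs i x = (THE f. (\<forall>j\<in>{1..r}. f j \<in> Xs j) \<and> (\<forall>j. j \<notin> {1..r} \<longrightarrow> f j = 0) \<and>
                          x = (\<Sum>j\<in>{1..r}. f j)) i"

definition separable_cost :: "nat \<Rightarrow> (nat \<Rightarrow> 'x::ab_group_add set) \<Rightarrow> ('x \<Rightarrow> real) \<Rightarrow> bool" where
  "separable_cost r Xs h \<longleftrightarrow> (\<forall>x. 0 \<le> h x) \<and>
     (\<forall>x. h x = (\<Sum>i\<in>{1..r}. h (rho r Xs i x)))"

primrec traj :: "('x::ab_group_add \<Rightarrow> 'x) \<Rightarrow> ('u \<Rightarrow> 'x) \<Rightarrow> 'x \<Rightarrow> (nat \<Rightarrow> 'u) \<Rightarrow> nat \<Rightarrow> 'x" where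
  "traj A Bm x0 p 0 = x0"
| "traj A Bm x0 p (Suc t) = A (traj A Bm x0 p t) + Bm (p t)"

definition cost :: "('x::ab_group_add \<Rightarrow> 'x) \<Rightarrow> ('u \<Rightarrow> 'x) \<Rightarrow> ('x \<Rightarrow> real) \<Rightarrow> real \<Rightarrow>
    'x \<Rightarrow> (nat \<Rightarrow> 'u) \<Rightarrow> ennreal" where
  "cost A Bm g \<alpha> x0 p = (\<Sum>t. ennreal (\<alpha> ^ t * g (traj A Bm x0 p t)))"

definition Jstar :: "('x::ab_group_add \<Rightarrow> 'x) \<Rightarrow> ('u \<Rightarrow> 'x) \<Rightarrow> ('x \<Rightarrow> real) \<Rightarrow> real \<Rightarrow> 'x \<Rightarrow> ennreal" where
  "Jstar A Bm g \<alpha> x0 = (INF p. cost A Bm g \<alpha> x0 p)"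

definition optimal_policy where
  "optimal_policy A Bm g \<alpha> x0 p \<longleftrightarrow> cost A Bm g \<alpha> x0 p = Jstar A Bm g \<alpha> x0"

definition is_argmin_input where
  "is_argmin_input A Bm g \<alpha> z u \<longleftrightarrow>
     (\<forall>v. Jstar A Bm g \<alpha> (A z + Bm u) \<le> Jstar A Bm g \<alpha> (A z + Bm v))"

text \<open>Optimal control law on the state set S (S = UNIV for the full problem, S = X_i for the
  i-th subproblem).\<close>
definition optimal_control_law where
  "optimal_control_law A Bm g \<alpha> S u \<longleftrightarrow> (\<forall>z\<in>S. is_argmin_input A Bm g \<alpha> z (u z))"

definition minima_attained where
  "minima_attained A Bm g \<alpha> S \<longleftrightarrow>
     (\<forall>z\<in>S. (\<exists>p. optimal_policy A Bm g \<alpha> z p) \<and> (\<exists>u. is_argmin_input A Bm g \<alpha> z u))"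

definition is_problem_decomposition where
  "is_problem_decomposition A B g \<alpha> r Xs \<longleftrightarrow>
     (\<forall>x. Jstar A B g \<alpha> x = (\<Sum>i\<in>{1..r}. Jstar A (rho r Xs i \<circ> B) g \<alpha> (rho r Xs i x))) \<and>
     (\<forall>x ps. (\<forall>i\<in>{1..r}. optimal_policy A (rho r Xs i \<circ> B) g \<alpha> (rho r Xs i x) (ps i)) \<longrightarrow>
        (\<exists>p. optimal_policy A B g \<alpha> x p \<and>
              (\<forall>t. B (p t) = (\<Sum>i\<in>{1..r}. rho r Xs i (B (ps i t))))))"

end

theory Submission
  imports Defs
begin

text \<open>
  First, dynamic programming for a single problem whose
  state set S is closed under the dynamics: the cost satisfies a one-step recursion, J*
  satisfies the Bellman equation, an input is an argmin exactly when it attains the Bellman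
  equation, and a policy is optimal exactly when its first input is an argmin and its tail
  is optimal (so optimality propagates along optimal trajectories).  Second, the algebra of
  the projections rho_i: they are additive, commute with A and split every trajectory of
  the full system into trajectories of the subproblems; with a separable cost this splits
  the cost, giving  sum_i J_i*(rho_i x) <= J*(x).  Third, the two directions of the
  theorem: a decomposition turns optimal subproblem laws into a compatible optimal law by
  reading off the first input of the assembled policy, and conversely compatible laws let
  us realise, at every time step, the inputs of optimal subproblem policies by one common
  input of the full system, which yields a full policy of cost  sum_i J_i*(rho_i x).
\<close>

section \<open>Dynamic programming for a single problem\<close>

lemma traj_shift:
  "traj A Bm x p (Suc t) = traj A Bm (A x + Bm (p 0)) (\<lambda>n. p (Suc n)) t"
  by (induction t) auto

lemma ennreal_suminf_head: "(\<Sum>n. f n :: ennreal) = f 0 + (\<Sum>n. f (Suc n))"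
proof -
  have "(\<lambda>n. f (Suc n)) sums (\<Sum>n. f (Suc n))" by (rule summable_sums) (rule summableI)
  then have "f sums ((\<Sum>n. f (Suc n)) + f 0)" by (rule sums_Suc)
  then show ?thesis by (simp add: sums_unique[symmetric] add.commute)
qed

lemma cost_step:
  assumes g_nonneg: "\<And>x. 0 \<le> g x" and "0 \<le> \<alpha>"
  shows "cost A Bm g \<alpha> x p
    = ennreal (g x) + ennreal \<alpha> * cost A Bm g \<alpha> (A x + Bm (p 0)) (\<lambda>n. p (Suc n))"
proof -
  let ?x1 = "A x + Bm (p 0)" and ?tail = "\<lambda>n. p (Suc n)"
  have shifted_term: "ennreal (\<alpha> ^ Suc t * g (traj A Bm x p (Suc t)))
      = ennreal \<alpha> * ennreal (\<alpha> ^ t * g (traj A Bm ?x1 ?tail t))" for t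
    unfolding traj_shift using assms by (simp add: ennreal_mult[symmetric] mult.assoc del: traj.simps)
  have "cost A Bm g \<alpha> x p
      = ennreal (g x) + (\<Sum>t. ennreal (\<alpha> ^ Suc t * g (traj A Bm x p (Suc t))))"
    unfolding cost_def by (subst ennreal_suminf_head) simp
  also have "\<dots> = ennreal (g x) + ennreal \<alpha> * cost A Bm g \<alpha> ?x1 ?tail"
    unfolding shifted_term cost_def by (simp add: ennreal_suminf_cmult)
  finally show ?thesis .
qed

lemma Jstar_le_cost: "Jstar A Bm g \<alpha> x \<le> cost A Bm g \<alpha> x p"
  unfolding Jstar_def by (rule INF_lower) simp

lemma ennreal_affine_cancel_le:
  "0 < \<alpha> \<Longrightarrow> ennreal c + ennreal \<alpha> * a \<le> ennreal c + ennreal \<alpha> * b \<Longrightarrow> a \<le> b"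
  by (simp add: ennreal_add_left_cancel_le ennreal_mult_le_mult_iff)

lemma ennreal_affine_cancel:
  "0 < \<alpha> \<Longrightarrow> ennreal c + ennreal \<alpha> * a = ennreal c + ennreal \<alpha> * b \<Longrightarrow> a = b"
  by (metis antisym order_refl ennreal_affine_cancel_le)

text \<open>A control problem whose state set S is closed under the dynamics and in which all
  minima are attained; both the full problem (S = UNIV) and every subproblem (S = X_i)
  are of this form.\<close>
locale closed_problem =
  fixes A :: "'x::ab_group_add \<Rightarrow> 'x" and Bm :: "'u \<Rightarrow> 'x"
    and g :: "'x \<Rightarrow> real" and \<alpha> :: real and S :: "'x set"
  assumes g_nonneg: "0 \<le> g x"
    and alpha_pos: "0 < \<alpha>"
    and closed: "z \<in> S \<Longrightarrow> A z + Bm v \<in> S"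
    and attained: "minima_attained A Bm g \<alpha> S"
begin

abbreviation J :: "'x \<Rightarrow> ennreal" where "J \<equiv> Jstar A Bm g \<alpha>"

lemma cost_recursion: "cost A Bm g \<alpha> z p
    = ennreal (g z) + ennreal \<alpha> * cost A Bm g \<alpha> (A z + Bm (p 0)) (\<lambda>n. p (Suc n))"
  using cost_step[of g \<alpha>] g_nonneg alpha_pos by simp

lemma optimal_policy_exists: "z \<in> S \<Longrightarrow> \<exists>p. optimal_policy A Bm g \<alpha> z p"
  using attained unfolding minima_attained_def by blast

text \<open>Bellman inequality: any first input followed by an optimal continuation is admissible.\<close>
lemma bellman_le:
  assumes "z \<in> S"
  shows "J z \<le> ennreal (g z) + ennreal \<alpha> * J (A z + Bm v)"
proof -
  obtain q where q: "optimal_policy A Bm g \<alpha> (A z + Bm v) q"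
    using optimal_policy_exists closed[OF assms] by blast
  have "J z \<le> cost A Bm g \<alpha> z (\<lambda>t. case t of 0 \<Rightarrow> v | Suc n \<Rightarrow> q n)"
    by (rule Jstar_le_cost)
  also have "\<dots> = ennreal (g z) + ennreal \<alpha> * J (A z + Bm v)"
    using q by (subst cost_recursion) (simp add: optimal_policy_def)
  finally show ?thesis .
qed

text \<open>Bellman equation: the first input of an optimal policy attains the bound.\<close>
lemma bellman_attained:
  assumes "z \<in> S"
  shows "\<exists>v. J z = ennreal (g z) + ennreal \<alpha> * J (A z + Bm v)"
proof -
  obtain q where q: "optimal_policy A Bm g \<alpha> z q" using optimal_policy_exists assms by blast
  have "ennreal (g z) + ennreal \<alpha> * J (A z + Bm (q 0))
      \<le> ennreal (g z) + ennreal \<alpha> * cost A Bm g \<alpha> (A z + Bm (q 0)) (\<lambda>n. q (Suc n))"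
    by (intro add_left_mono mult_left_mono Jstar_le_cost) simp
  also have "\<dots> = J z" using q by (simp add: cost_recursion[symmetric] optimal_policy_def)
  finally show ?thesis using bellman_le[OF assms, of "q 0"] by (blast intro: antisym)
qed

lemma argmin_iff_bellman:
  assumes "z \<in> S"
  shows "is_argmin_input A Bm g \<alpha> z v \<longleftrightarrow> J z = ennreal (g z) + ennreal \<alpha> * J (A z + Bm v)"
proof
  assume "is_argmin_input A Bm g \<alpha> z v"
  then have min: "J (A z + Bm v) \<le> J (A z + Bm w)" for w
    unfolding is_argmin_input_def by blast
  obtain w where "J z = ennreal (g z) + ennreal \<alpha> * J (A z + Bm w)"
    using bellman_attained[OF assms] by blast
  moreover have "ennreal (g z) + ennreal \<alpha> * J (A z + Bm v)
      \<le> ennreal (g z) + ennreal \<alpha> * J (A z + Bm w)"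
    by (intro add_left_mono mult_left_mono min) simp
  ultimately show "J z = ennreal (g z) + ennreal \<alpha> * J (A z + Bm v)"
    using bellman_le[OF assms, of v] by (simp add: antisym)
next
  assume eq: "J z = ennreal (g z) + ennreal \<alpha> * J (A z + Bm v)"
  show "is_argmin_input A Bm g \<alpha> z v"
    unfolding is_argmin_input_def
    using bellman_le[OF assms] alpha_pos by (metis eq ennreal_affine_cancel_le)
qed

lemma optimal_policy_iff:
  assumes "z \<in> S"
  shows "optimal_policy A Bm g \<alpha> z p \<longleftrightarrow>
    is_argmin_input A Bm g \<alpha> z (p 0) \<and>
    optimal_policy A Bm g \<alpha> (A z + Bm (p 0)) (\<lambda>n. p (Suc n))"
proof -
  let ?z1 = "A z + Bm (p 0)" and ?tail = "\<lambda>n. p (Suc n)"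
  let ?c1 = "cost A Bm g \<alpha> ?z1 ?tail"
  have mono: "ennreal (g z) + ennreal \<alpha> * J ?z1 \<le> ennreal (g z) + ennreal \<alpha> * ?c1"
    by (intro add_left_mono mult_left_mono Jstar_le_cost) simp
  show ?thesis
  proof
    assume "optimal_policy A Bm g \<alpha> z p"
    then have "ennreal (g z) + ennreal \<alpha> * ?c1 = J z"
      by (simp add: cost_recursion[symmetric] optimal_policy_def)
    with mono bellman_le[OF assms, of "p 0"]
    have eq: "ennreal (g z) + ennreal \<alpha> * J ?z1 = ennreal (g z) + ennreal \<alpha> * ?c1"
      and bell: "J z = ennreal (g z) + ennreal \<alpha> * J ?z1"
      by (simp_all add: antisym)
    from ennreal_affine_cancel[OF alpha_pos eq] bell show
      "is_argmin_input A Bm g \<alpha> z (p 0) \<and> optimal_policy A Bm g \<alpha> ?z1 ?tail"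
      by (simp add: argmin_iff_bellman[OF assms] optimal_policy_def)
  next
    assume "is_argmin_input A Bm g \<alpha> z (p 0) \<and> optimal_policy A Bm g \<alpha> ?z1 ?tail"
    then show "optimal_policy A Bm g \<alpha> z p"
      unfolding optimal_policy_def
      by (subst cost_recursion) (simp add: argmin_iff_bellman[OF assms] optimal_policy_def)
  qed
qed

lemma argmin_starts_optimal_policy:
  assumes "z \<in> S" and "is_argmin_input A Bm g \<alpha> z v"
  shows "\<exists>p. optimal_policy A Bm g \<alpha> z p \<and> p 0 = v"
proof -
  obtain q where "optimal_policy A Bm g \<alpha> (A z + Bm v) q"
    using optimal_policy_exists closed[OF assms(1)] by blast
  then show ?thesis
    using assms by (intro exI[of _ "\<lambda>t. case t of 0 \<Rightarrow> v | Suc n \<Rightarrow> q n"])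
      (subst optimal_policy_iff, simp_all)
qed

lemma optimal_along_trajectory:
  assumes "z \<in> S" and "optimal_policy A Bm g \<alpha> z p"
  shows "traj A Bm z p t \<in> S \<and> optimal_policy A Bm g \<alpha> (traj A Bm z p t) (\<lambda>n. p (n + t))"
proof (induction t)
  case 0
  then show ?case using assms by simp
next
  case (Suc t)
  then show ?case
    using optimal_policy_iff[of "traj A Bm z p t" "\<lambda>n. p (n + t)"] closed by simp
qed

lemma argmin_along_trajectory:
  assumes "z \<in> S" and "optimal_policy A Bm g \<alpha> z p"
  shows "is_argmin_input A Bm g \<alpha> (traj A Bm z p t) (p t)"
  using optimal_along_trajectory[OF assms, of t]
    optimal_policy_iff[of "traj A Bm z p t" "\<lambda>n. p (n + t)"] by simp

end

section \<open>Projections of a direct sum decomposition\<close>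

locale direct_sum_decomposition =
  fixes sX :: "'f::field \<Rightarrow> 'x::ab_group_add \<Rightarrow> 'x" and A :: "'x \<Rightarrow> 'x"
    and r :: nat and Xs :: "nat \<Rightarrow> 'x set"
  assumes module: "module sX"
    and A_add: "A (x + y) = A x + A y"
    and decomposition: "is_decomposition sX A r Xs"
begin

lemma invariant_subspaces: "\<forall>i\<in>{1..r}. module.subspace sX (Xs i) \<and> A ` Xs i \<subseteq> Xs i"
  using decomposition unfolding is_decomposition_def by (elim conjE)

lemma subspace: "i \<in> {1..r} \<Longrightarrow> module.subspace sX (Xs i)"
  and invariant: "i \<in> {1..r} \<Longrightarrow> z \<in> Xs i \<Longrightarrow> A z \<in> Xs i"
  using invariant_subspaces by blast+

lemma unique_components:
  "\<exists>!f. (\<forall>i\<in>{1..r}. f i \<in> Xs i) \<and> (\<forall>i. i \<notin> {1..r} \<longrightarrow> f i = 0) \<and> x = (\<Sum>i\<in>{1..r}. f i)"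
  using decomposition unfolding is_decomposition_def by (elim conjE) (erule spec)

lemma rho_components:
  "(\<forall>j\<in>{1..r}. rho r Xs j x \<in> Xs j) \<and> (\<forall>j. j \<notin> {1..r} \<longrightarrow> rho r Xs j x = 0) \<and>
    x = (\<Sum>j\<in>{1..r}. rho r Xs j x)"
  using theI'[OF unique_components[of x]] unfolding rho_def .

lemma rho_unique:
  assumes "\<forall>j\<in>{1..r}. f j \<in> Xs j" "\<forall>j. j \<notin> {1..r} \<longrightarrow> f j = 0" "x = (\<Sum>j\<in>{1..r}. f j)"
  shows "rho r Xs i x = f i"
  unfolding rho_def using the1_equality[OF unique_components, of f] assms by simp

lemma rho_in: "i \<in> {1..r} \<Longrightarrow> rho r Xs i x \<in> Xs i"
  and rho_out: "i \<notin> {1..r} \<Longrightarrow> rho r Xs i x = 0"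
  and rho_sum: "x = (\<Sum>j\<in>{1..r}. rho r Xs j x)"
  using rho_components[of x] by blast+

lemma rho_of_sum:
  assumes "\<forall>i\<in>{1..r}. h i \<in> Xs i" and "j \<in> {1..r}"
  shows "rho r Xs j (\<Sum>i\<in>{1..r}. h i) = h j"
proof -
  have "rho r Xs j (\<Sum>i\<in>{1..r}. h i) = (if j \<in> {1..r} then h j else 0)"
    by (rule rho_unique) (use assms(1) in auto)
  then show ?thesis using assms(2) by simp
qed

lemma rho_add: "rho r Xs i (x + y) = rho r Xs i x + rho r Xs i y"
proof (rule rho_unique)
  show "\<forall>j\<in>{1..r}. rho r Xs j x + rho r Xs j y \<in> Xs j"
    using subspace rho_in module.subspace_add[OF module] by blast
  show "x + y = (\<Sum>j\<in>{1..r}. rho r Xs j x + rho r Xs j y)"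
    unfolding sum.distrib by (metis rho_sum)
qed (simp add: rho_out)

lemma rho_A: "rho r Xs i (A x) = A (rho r Xs i x)"
proof -
  have A_zero: "A 0 = 0" using A_add[of 0 0] by simp
  have A_sum: "A (sum f F) = (\<Sum>j\<in>F. A (f j))" for f :: "nat \<Rightarrow> 'x" and F
    by (induction F rule: infinite_finite_induct) (auto simp: A_zero A_add)
  show ?thesis
  proof (rule rho_unique)
    show "A x = (\<Sum>j\<in>{1..r}. A (rho r Xs j x))" by (subst rho_sum) (rule A_sum)
  qed (use invariant rho_in rho_out A_zero in auto)
qed

lemma rho_step: "rho r Xs i (A x + v) = A (rho r Xs i x) + rho r Xs i v"
  by (simp add: rho_add rho_A)

end

section \<open>The full problem and its subproblems\<close>

text \<open>The property on the right-hand side of the theorem: every family of optimal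
  subproblem laws is realised, component by component, by one optimal law of the full
  problem.\<close>
definition compatible_control_laws where
  "compatible_control_laws A B g \<alpha> r Xs \<longleftrightarrow>
    (\<forall>us. (\<forall>i\<in>{1..r}. optimal_control_law A (rho r Xs i \<circ> B) g \<alpha> (Xs i) (us i)) \<longrightarrow>
      (\<exists>u. optimal_control_law A B g \<alpha> UNIV u \<and>
        (\<forall>x. \<forall>i\<in>{1..r}.
           rho r Xs i (A x + B (u x)) = A (rho r Xs i x) + rho r Xs i (B (us i (rho r Xs i x))))))"

locale decomposed_problem = direct_sum_decomposition sX A r Xs
  for sX :: "'f::field \<Rightarrow> 'x::ab_group_add \<Rightarrow> 'x" and A r Xs +
  fixes B :: "'u \<Rightarrow> 'x" and g :: "'x \<Rightarrow> real" and \<alpha> :: real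
  assumes separable: "separable_cost r Xs g"
    and alpha_pos: "0 < \<alpha>"
    and attained: "minima_attained A B g \<alpha> UNIV"
    and attained_sub: "i \<in> {1..r} \<Longrightarrow> minima_attained A (rho r Xs i \<circ> B) g \<alpha> (Xs i)"
begin

lemma g_nonneg: "0 \<le> g x"
  and g_split: "g x = (\<Sum>i\<in>{1..r}. g (rho r Xs i x))"
  using separable unfolding separable_cost_def by blast+

sublocale full: closed_problem A B g \<alpha> UNIV
  by unfold_locales (simp_all add: g_nonneg alpha_pos attained)

text \<open>Each subproblem lives on X_i, which is closed under its dynamics by A-invariance.\<close>
lemma sub_problem: "i \<in> {1..r} \<Longrightarrow> closed_problem A (rho r Xs i \<circ> B) g \<alpha> (Xs i)"
  by unfold_locales
    (auto simp: g_nonneg alpha_pos attained_sub rho_in invariant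
      intro: module.subspace_add[OF module subspace])

lemma traj_rho:
  assumes "\<forall>t. rho r Xs i (B (p t)) = rho r Xs i (B (q t))"
  shows "rho r Xs i (traj A B x p t) = traj A (rho r Xs i \<circ> B) (rho r Xs i x) q t"
  by (induction t) (simp_all add: rho_step assms)

lemma cost_split:
  assumes "\<forall>i\<in>{1..r}. \<forall>t. rho r Xs i (B (p t)) = rho r Xs i (B (q i t))"
  shows "cost A B g \<alpha> x p = (\<Sum>i\<in>{1..r}. cost A (rho r Xs i \<circ> B) g \<alpha> (rho r Xs i x) (q i))"
proof -
  let ?gi = "\<lambda>i t. ennreal (\<alpha> ^ t * g (traj A (rho r Xs i \<circ> B) (rho r Xs i x) (q i) t))"
  have stage: "ennreal (\<alpha> ^ t * g (traj A B x p t)) = (\<Sum>i\<in>{1..r}. ?gi i t)" for t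
  proof -
    have "g (traj A B x p t) = (\<Sum>i\<in>{1..r}. g (traj A (rho r Xs i \<circ> B) (rho r Xs i x) (q i) t))"
      by (subst g_split, intro sum.cong refl arg_cong[where f = g] traj_rho) (use assms in auto)
    then show ?thesis
      using alpha_pos g_nonneg by (simp add: sum_distrib_left sum_ennreal)
  qed
  have "cost A B g \<alpha> x p = (\<Sum>t. \<Sum>i\<in>{1..r}. ?gi i t)" unfolding cost_def stage ..
  also have "\<dots> = (\<Sum>i\<in>{1..r}. \<Sum>t. ?gi i t)" by (rule suminf_sum) (rule summableI)
  finally show ?thesis unfolding cost_def .
qed

text \<open>Projecting an optimal full policy shows that the subproblems never do worse.\<close>
lemma Jstar_sum_le: "(\<Sum>i\<in>{1..r}. Jstar A (rho r Xs i \<circ> B) g \<alpha> (rho r Xs i x)) \<le> Jstar A B g \<alpha> x"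
proof -
  obtain p where p: "optimal_policy A B g \<alpha> x p" using full.optimal_policy_exists by blast
  have "(\<Sum>i\<in>{1..r}. Jstar A (rho r Xs i \<circ> B) g \<alpha> (rho r Xs i x))
      \<le> (\<Sum>i\<in>{1..r}. cost A (rho r Xs i \<circ> B) g \<alpha> (rho r Xs i x) p)"
    by (intro sum_mono Jstar_le_cost)
  also have "\<dots> = Jstar A B g \<alpha> x"
    using p cost_split[of p "\<lambda>_. p" x] by (simp add: optimal_policy_def)
  finally show ?thesis .
qed

text \<open>Forward direction: the first input of the full policy assembled from optimal
  subproblem policies starting with us_i is a compatible optimal law.\<close>
lemma decomposition_imp_compatible_laws:
  assumes dec: "is_problem_decomposition A B g \<alpha> r Xs"
  shows "compatible_control_laws A B g \<alpha> r Xs"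
  unfolding compatible_control_laws_def
proof (intro allI impI)
  fix us assume laws: "\<forall>i\<in>{1..r}. optimal_control_law A (rho r Xs i \<circ> B) g \<alpha> (Xs i) (us i)"
  define ps where "ps x i =
      (SOME q. optimal_policy A (rho r Xs i \<circ> B) g \<alpha> (rho r Xs i x) q \<and> q 0 = us i (rho r Xs i x))"
    for x i
  have ps: "optimal_policy A (rho r Xs i \<circ> B) g \<alpha> (rho r Xs i x) (ps x i) \<and> ps x i 0 = us i (rho r Xs i x)"
    if i: "i \<in> {1..r}" for x i
  proof -
    have "is_argmin_input A (rho r Xs i \<circ> B) g \<alpha> (rho r Xs i x) (us i (rho r Xs i x))"
      using laws i rho_in[OF i] unfolding optimal_control_law_def by blast
    from closed_problem.argmin_starts_optimal_policy[OF sub_problem[OF i] rho_in[OF i] this]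
    show ?thesis unfolding ps_def by (rule someI_ex)
  qed
  have "\<exists>p. optimal_policy A B g \<alpha> x p \<and> (\<forall>t. B (p t) = (\<Sum>i\<in>{1..r}. rho r Xs i (B (ps x i t))))"
    for x using dec ps unfolding is_problem_decomposition_def by blast
  then obtain P where P: "\<And>x. optimal_policy A B g \<alpha> x (P x)"
    and BP: "\<And>x t. B (P x t) = (\<Sum>i\<in>{1..r}. rho r Xs i (B (ps x i t)))"
    by metis
  show "\<exists>u. optimal_control_law A B g \<alpha> UNIV u \<and>
      (\<forall>x. \<forall>i\<in>{1..r}.
         rho r Xs i (A x + B (u x)) = A (rho r Xs i x) + rho r Xs i (B (us i (rho r Xs i x))))"
  proof (intro exI conjI allI ballI)
    show "optimal_control_law A B g \<alpha> UNIV (\<lambda>x. P x 0)"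
      using P full.optimal_policy_iff unfolding optimal_control_law_def by blast
  next
    fix x i assume i: "i \<in> {1..r}"
    have "rho r Xs i (B (P x 0)) = rho r Xs i (B (us i (rho r Xs i x)))"
      unfolding BP using rho_of_sum[OF _ i] rho_in ps[OF i] by simp
    then show "rho r Xs i (A x + B (P x 0)) = A (rho r Xs i x) + rho r Xs i (B (us i (rho r Xs i x)))"
      by (simp add: rho_step)
  qed
qed

text \<open>Apply
  the hypothesis to laws that pick w_i at z_i and evaluate at the state with components z_i.\<close>
lemma common_input:
  assumes compat: "compatible_control_laws A B g \<alpha> r Xs"
    and z: "\<forall>i\<in>{1..r}. z i \<in> Xs i"
    and w: "\<forall>i\<in>{1..r}. is_argmin_input A (rho r Xs i \<circ> B) g \<alpha> (z i) (w i)"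
  shows "\<exists>v. \<forall>i\<in>{1..r}. rho r Xs i (B v) = rho r Xs i (B (w i))"
proof -
  define us where "us i y = (if y = z i then w i
      else (SOME v. is_argmin_input A (rho r Xs i \<circ> B) g \<alpha> y v))" for i y
  have "\<forall>i\<in>{1..r}. optimal_control_law A (rho r Xs i \<circ> B) g \<alpha> (Xs i) (us i)"
    using w attained_sub unfolding optimal_control_law_def minima_attained_def us_def
    by (auto intro: someI_ex)
  then obtain u where u: "\<And>x i. i \<in> {1..r} \<Longrightarrow>
      rho r Xs i (A x + B (u x)) = A (rho r Xs i x) + rho r Xs i (B (us i (rho r Xs i x)))"
    using compat unfolding compatible_control_laws_def by blast
  let ?x = "\<Sum>i\<in>{1..r}. z i"
  have "rho r Xs i (B (u ?x)) = rho r Xs i (B (w i))" if i: "i \<in> {1..r}" for i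
    using u[OF i, of ?x] rho_of_sum[OF z i] by (simp add: rho_step us_def)
  then show ?thesis by blast
qed

lemma policy_from_compatible_laws:
  assumes compat: "compatible_control_laws A B g \<alpha> r Xs"
    and opt: "\<forall>i\<in>{1..r}. optimal_policy A (rho r Xs i \<circ> B) g \<alpha> (rho r Xs i x) (ps i)"
  shows "\<exists>p. (\<forall>t. B (p t) = (\<Sum>i\<in>{1..r}. rho r Xs i (B (ps i t)))) \<and>
    cost A B g \<alpha> x p = (\<Sum>i\<in>{1..r}. Jstar A (rho r Xs i \<circ> B) g \<alpha> (rho r Xs i x))"
proof -
  let ?z = "\<lambda>t i. traj A (rho r Xs i \<circ> B) (rho r Xs i x) (ps i) t"
  have "\<exists>v. \<forall>i\<in>{1..r}. rho r Xs i (B v) = rho r Xs i (B (ps i t))" for t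
  proof (rule common_input[OF compat])
    show "\<forall>i\<in>{1..r}. ?z t i \<in> Xs i"
      using closed_problem.optimal_along_trajectory[OF sub_problem rho_in] opt by blast
    show "\<forall>i\<in>{1..r}. is_argmin_input A (rho r Xs i \<circ> B) g \<alpha> (?z t i) (ps i t)"
      using closed_problem.argmin_along_trajectory[OF sub_problem rho_in] opt by blast
  qed
  then obtain p where p: "\<And>t. \<forall>i\<in>{1..r}. rho r Xs i (B (p t)) = rho r Xs i (B (ps i t))"
    by metis
  have "B (p t) = (\<Sum>i\<in>{1..r}. rho r Xs i (B (ps i t)))" for t
    using p[of t] by (subst rho_sum) simp
  moreover have "cost A B g \<alpha> x p = (\<Sum>i\<in>{1..r}. Jstar A (rho r Xs i \<circ> B) g \<alpha> (rho r Xs i x))"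
    using cost_split[of p ps x] p opt by (simp add: optimal_policy_def)
  ultimately show ?thesis by blast
qed

text \<open>Converse direction: the assembled policy shows J* <= sum_i J_i*, hence equality,
  and so it is itself optimal.\<close>
lemma compatible_laws_imp_decomposition:
  assumes compat: "compatible_control_laws A B g \<alpha> r Xs"
  shows "is_problem_decomposition A B g \<alpha> r Xs"
proof -
  have value_split: "Jstar A B g \<alpha> x = (\<Sum>i\<in>{1..r}. Jstar A (rho r Xs i \<circ> B) g \<alpha> (rho r Xs i x))"
    for x
  proof -
    have "\<forall>i. \<exists>q. i \<in> {1..r} \<longrightarrow> optimal_policy A (rho r Xs i \<circ> B) g \<alpha> (rho r Xs i x) q"
      using closed_problem.optimal_policy_exists[OF sub_problem rho_in] by blast
    then obtain ps where "\<forall>i\<in>{1..r}. optimal_policy A (rho r Xs i \<circ> B) g \<alpha> (rho r Xs i x) (ps i)"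
      by metis
    then obtain p where "cost A B g \<alpha> x p = (\<Sum>i\<in>{1..r}. Jstar A (rho r Xs i \<circ> B) g \<alpha> (rho r Xs i x))"
      using policy_from_compatible_laws[OF compat] by blast
    then show ?thesis using Jstar_le_cost[of A B g \<alpha> x p] Jstar_sum_le[of x] by simp
  qed
  show ?thesis
    unfolding is_problem_decomposition_def
  proof (intro conjI allI impI)
    fix x ps
    assume "\<forall>i\<in>{1..r}. optimal_policy A (rho r Xs i \<circ> B) g \<alpha> (rho r Xs i x) (ps i)"
    then obtain p where "\<forall>t. B (p t) = (\<Sum>i\<in>{1..r}. rho r Xs i (B (ps i t)))"
      and "cost A B g \<alpha> x p = (\<Sum>i\<in>{1..r}. Jstar A (rho r Xs i \<circ> B) g \<alpha> (rho r Xs i x))"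
      using policy_from_compatible_laws[OF compat] by blast
    then show "\<exists>p. optimal_policy A B g \<alpha> x p \<and> (\<forall>t. B (p t) = (\<Sum>i\<in>{1..r}. rho r Xs i (B (ps i t))))"
      using value_split[of x] unfolding optimal_policy_def by auto
  qed (rule value_split)
qed

end

theorem lemma4:
  fixes sX :: "'f::field \<Rightarrow> 'x::ab_group_add \<Rightarrow> 'x"
    and sU :: "'f \<Rightarrow> 'u::ab_group_add \<Rightarrow> 'u"
    and A :: "'x \<Rightarrow> 'x" and B :: "'u \<Rightarrow> 'x"
    and g :: "'x \<Rightarrow> real" and \<alpha> :: real
    and r :: nat and Xs :: "nat \<Rightarrow> 'x set"
  assumes "fin_dim_vs sX" and "fin_dim_vs sU"
    and "Vector_Spaces.linear sX sX A" and "Vector_Spaces.linear sU sX B" and "inj B"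
    and "\<forall>x. g x = 0 \<longleftrightarrow> x = 0"
    and "is_decomposition sX A r Xs"
    and "separable_cost r Xs g"
    and "0 < \<alpha>" and "\<alpha> < 1"
    and "minima_attained A B g \<alpha> UNIV"
    and "\<forall>i\<in>{1..r}. minima_attained A (rho r Xs i \<circ> B) g \<alpha> (Xs i)"
  shows "is_problem_decomposition A B g \<alpha> r Xs \<longleftrightarrow>
    (\<forall>us. (\<forall>i\<in>{1..r}. optimal_control_law A (rho r Xs i \<circ> B) g \<alpha> (Xs i) (us i)) \<longrightarrow>
      (\<exists>u. optimal_control_law A B g \<alpha> UNIV u \<and>
        (\<forall>x. \<forall>i\<in>{1..r}.
           rho r Xs i (A x + B (u x)) = A (rho r Xs i x) + rho r Xs i (B (us i (rho r Xs i x))))))"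
proof -
  have "module sX"
    using assms(1) unfolding fin_dim_vs_def module_iff_vector_space by blast
  moreover have "\<And>x y. A (x + y) = A x + A y"
    using assms(3) by (metis Vector_Spaces.linear_iff)
  ultimately interpret decomposed_problem sX A r Xs B g \<alpha>
    using assms(7-12)
    by (intro decomposed_problem.intro direct_sum_decomposition.intro
        decomposed_problem_axioms.intro) simp_all
  show ?thesis
    unfolding compatible_control_laws_def[symmetric]
    using decomposition_imp_compatible_laws compatible_laws_imp_decomposition by blast
qed

end
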